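(* Let $S$ be a compact, metrizable, separable space and let $A$ be the generator of a Feller semigroup on $C(S)$ with resolvent $R_\lambda=(\lambda-A)^{-1}$, $\lambda>0$. Suppose $A$ is not conservative, i.e. $\lambda R_\lambda 1_S\neq 1_S$ for some $\lambda>0$. Then there exists at least one Laplace transform of an exit law for $A$.
   Context: A Feller semigroup is a strongly continuous semigroup of positive contractions on $C(S)$ (real continuous functions, sup norm) with $T(0)=I$, not necessarily conservative; it is conservative iff $\lambda R_\lambda1_S=1_S$ for all $\lambda>0$. A family $\ell_\lambda$, $\lambda>0$, is the Laplace transform of an exit law for $A$ if: (a) $(0,\infty)\ni\lambda\mapsto\ell_\lambda\in C(S)$ is locally bounded, non-negative and $\ell_\lambda\neq0$ for at least one $\lambda$; (b) $\lim_{\lambda\to0+}\ell_\lambda(x)\le1$ for each $x\in S$; (c) $(\lambda-\mu)R_\lambda\ell_\mu=\ell_\mu-\ell_\lambda$ for all $\lambda,\mu>0$. *)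

theory Defs
  imports "HOL-Analysis.Analysis"
begin

(* C(S) for compact S is represented by the bounded continuous functions
  type  'a \<Rightarrow>_C real  (sup norm); S is the whole type 'a. *)

type_synonym 'a CS = "'a \<Rightarrow>\<^sub>C real"

definition nonneg_fun :: "'a::topological_space CS \<Rightarrow> bool" where
  "nonneg_fun f \<longleftrightarrow> (\<forall>x. 0 \<le> apply_bcontfun f x)"

definition feller_semigroup :: "(real \<Rightarrow> 'a::topological_space CS \<Rightarrow> 'a CS) \<Rightarrow> bool" where
  "feller_semigroup T \<longleftrightarrow>
     (\<forall>t\<ge>0. linear (T t)) \<and>
     (\<forall>t\<ge>0. \<forall>f. nonneg_fun f \<longrightarrow> nonneg_fun (T t f)) \<and>
     (\<forall>t\<ge>0. \<forall>f. norm (T t f) \<le> norm f) \<and>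
     T 0 = id \<and>
     (\<forall>s\<ge>0. \<forall>t\<ge>0. T (s + t) = T s \<circ> T t) \<and>
     (\<forall>f. ((\<lambda>t. T t f) \<longlongrightarrow> f) (at_right 0))"

(* Graph of the generator A: f \<in> D(A) and A f = g. *)
definition generator :: "(real \<Rightarrow> 'a::topological_space CS \<Rightarrow> 'a CS) \<Rightarrow> 'a CS \<Rightarrow> 'a CS \<Rightarrow> bool" where
  "generator T f g \<longleftrightarrow> ((\<lambda>t. (T t f - f) /\<^sub>R t) \<longlongrightarrow> g) (at_right 0)"

definition resolvent :: "(real \<Rightarrow> 'a::topological_space CS \<Rightarrow> 'a CS) \<Rightarrow> real \<Rightarrow> 'a CS \<Rightarrow> 'a CS" where
  "resolvent T lam g = (THE f. \<exists>h. generator T f h \<and> lam *\<^sub>R f - h = g)"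

definition one_S :: "'a::topological_space CS" where
  "one_S = const_bcontfun 1"

definition exit_law_LT :: "(real \<Rightarrow> 'a::topological_space CS \<Rightarrow> 'a CS) \<Rightarrow> (real \<Rightarrow> 'a CS) \<Rightarrow> bool" where
  "exit_law_LT R l \<longleftrightarrow>
     (\<forall>a b. 0 < a \<longrightarrow> a \<le> b \<longrightarrow> bounded (l ` {a..b})) \<and>
     (\<forall>lam>0. nonneg_fun (l lam)) \<and>
     (\<exists>lam>0. l lam \<noteq> 0) \<and>
     (\<forall>x. \<exists>L. ((\<lambda>lam. apply_bcontfun (l lam) x) \<longlongrightarrow> L) (at_right 0) \<and> L \<le> 1) \<and>
     (\<forall>lam>0. \<forall>mu>0. (lam - mu) *\<^sub>R R lam (l mu) = l mu - l lam)"

end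

(* The resolvent is the Laplace transform R_lam g = int_0^oo exp (-lam t) T_t g dt of the
  semigroup: this function lies in the domain of the generator A and solves (lam - A) f = g, and
  dissipativity of A (lam |f| <= |(lam - A) f|) makes that solution unique. Hence R_lam is
  positive, |lam R_lam| <= 1, and the resolvent equation holds. The defect
  l_lam = 1 - lam R_lam 1 is then a Laplace transform of an exit law: it takes values in [0, 1],
  it is non-zero by non-conservativity, the resolvent equation turns into
  (lam - mu) R_lam l_mu = l_mu - l_lam, and by positivity of R_lam this identity makes l_lam
  decreasing in lam, so that it has a limit at 0+. *)

theory Submission
  imports Defs
begin

instance bcontfun :: (metric_space, banach) banach ..

lemma bounded_linear_apply_bcontfun:
  "bounded_linear (\<lambda>f::'a::topological_space \<Rightarrow>\<^sub>C real. apply_bcontfun f x)"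
  by (rule bounded_linear_intro[where K = 1]) (simp_all, metis norm_bounded real_norm_def)

definition laplace_integral ::
    "(real \<Rightarrow> 'a::topological_space CS \<Rightarrow> 'a CS) \<Rightarrow> real \<Rightarrow> 'a CS \<Rightarrow> real \<Rightarrow> 'a CS" where
  "laplace_integral T lam g x = integral {0..x} (\<lambda>t. exp (- lam * t) *\<^sub>R T t g)"

definition laplace_transform ::
    "(real \<Rightarrow> 'a::topological_space CS \<Rightarrow> 'a CS) \<Rightarrow> real \<Rightarrow> 'a CS \<Rightarrow> 'a CS" where
  "laplace_transform T lam g = lim (\<lambda>n. laplace_integral T lam g (real n))"

definition resolvent_defect :: "(real \<Rightarrow> 'a::topological_space CS \<Rightarrow> 'a CS) \<Rightarrow> real \<Rightarrow> 'a CS" where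
  "resolvent_defect T lam = one_S - lam *\<^sub>R resolvent T lam one_S"

lemma antimono_bounded_tendsto_at_right:
  fixes f :: "real \<Rightarrow> real"
  assumes "\<And>a b. x < a \<Longrightarrow> a \<le> b \<Longrightarrow> f b \<le> f a" and bounded: "\<And>a. x < a \<Longrightarrow> f a \<le> K"
  shows "\<exists>L. (f \<longlongrightarrow> L) (at_right x) \<and> L \<le> K"
proof -
  let ?M = "Inf ((\<lambda>a. - f a) ` {x<..})"
  have "((\<lambda>a. - f a) \<longlongrightarrow> ?M) (at_right x)"
    using Lim_right_bound[of UNIV x "\<lambda>a. - f a" "- K"] assms by simp
  then have "(f \<longlongrightarrow> - ?M) (at_right x)"
    using tendsto_minus by fastforce
  moreover have "- K \<le> ?M"
    using bounded by (intro cInf_greatest) auto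
  ultimately show ?thesis
    by auto
qed

lemma exp_minus_mult_real_nat: "exp (- (lam * real n)) = exp (- lam) ^ n"
  by (simp add: exp_of_nat_mult[symmetric] mult.commute)

context
  fixes T :: "real \<Rightarrow> ('a::metric_space \<Rightarrow>\<^sub>C real) \<Rightarrow> ('a \<Rightarrow>\<^sub>C real)"
  assumes feller: "feller_semigroup T"
begin

lemma linear_semigroup: "0 \<le> t \<Longrightarrow> linear (T t)"
  using feller by (simp add: feller_semigroup_def)

lemma nonneg_semigroup: "0 \<le> t \<Longrightarrow> nonneg_fun f \<Longrightarrow> nonneg_fun (T t f)"
  using feller by (simp add: feller_semigroup_def)

lemma norm_semigroup_le: "0 \<le> t \<Longrightarrow> norm (T t f) \<le> norm f"
  using feller by (simp add: feller_semigroup_def)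

lemma semigroup_0: "T 0 f = f"
  using feller by (simp add: feller_semigroup_def)

lemma semigroup_add: "0 \<le> s \<Longrightarrow> 0 \<le> t \<Longrightarrow> T (s + t) f = T s (T t f)"
  using feller by (simp add: feller_semigroup_def)

lemma semigroup_tendsto_0: "((\<lambda>t. T t f) \<longlongrightarrow> f) (at_right 0)"
  using feller by (simp add: feller_semigroup_def)

lemma bounded_linear_semigroup: "0 \<le> t \<Longrightarrow> bounded_linear (T t)"
  by (rule bounded_linear_intro[where K = 1])
    (simp_all add: linear_add linear_scale linear_semigroup norm_semigroup_le)

lemma dist_semigroup_le:
  assumes "0 \<le> s" "s \<le> t"
  shows "dist (T s g) (T t g) \<le> dist g (T (t - s) g)"
proof -
  have "T t g = T s (T (t - s) g)"
    using semigroup_add[of s "t - s"] assms by simp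
  then have "dist (T s g) (T t g) = norm (T s (g - T (t - s) g))"
    using assms by (simp add: dist_norm linear_diff linear_semigroup)
  also have "\<dots> \<le> dist g (T (t - s) g)"
    using assms by (simp add: dist_norm norm_semigroup_le)
  finally show ?thesis .
qed

lemma continuous_on_semigroup: "continuous_on {0..} (\<lambda>t. T t g)"
  unfolding continuous_on_iff
proof (intro ballI allI impI)
  fix t e :: real
  assume t: "t \<in> {0..}" and "e > 0"
  then obtain b where "b > 0" and b: "\<And>h. 0 < h \<Longrightarrow> h < b \<Longrightarrow> dist (T h g) g < e"
    using semigroup_tendsto_0[of g] unfolding tendsto_iff eventually_at_right_field by blast
  have "dist (T s g) (T t g) < e" if s: "s \<in> {0..}" "dist s t < b" for s
  proof -
    have "dist (T s g) (T t g) \<le> dist g (T \<bar>t - s\<bar> g)"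
      using dist_semigroup_le[of s t g] dist_semigroup_le[of t s g] s t
      by (cases "s \<le> t") (auto simp: dist_commute)
    also have "\<dots> < e"
      using b[of "\<bar>t - s\<bar>"] s \<open>e > 0\<close>
      by (cases "s = t") (auto simp: semigroup_0 dist_commute dist_real_def)
    finally show ?thesis .
  qed
  then show "\<exists>d>0. \<forall>s\<in>{0..}. dist s t < d \<longrightarrow> dist (T s g) (T t g) < e"
    using \<open>b > 0\<close> by blast
qed

lemma generator_scaleR_add:
  assumes "generator T f1 h1" "generator T f2 h2"
  shows "generator T (a *\<^sub>R f1 + b *\<^sub>R f2) (a *\<^sub>R h1 + b *\<^sub>R h2)"
proof -
  have "((\<lambda>t. a *\<^sub>R ((T t f1 - f1) /\<^sub>R t) + b *\<^sub>R ((T t f2 - f2) /\<^sub>R t))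
          \<longlongrightarrow> a *\<^sub>R h1 + b *\<^sub>R h2) (at_right 0)"
    using assms unfolding generator_def by (intro tendsto_intros)
  moreover have "\<forall>\<^sub>F t in at_right 0.
      a *\<^sub>R ((T t f1 - f1) /\<^sub>R t) + b *\<^sub>R ((T t f2 - f2) /\<^sub>R t)
      = (T t (a *\<^sub>R f1 + b *\<^sub>R f2) - (a *\<^sub>R f1 + b *\<^sub>R f2)) /\<^sub>R t"
    using eventually_at_right_less[of 0]
    by eventually_elim (simp add: linear_add linear_scale linear_semigroup algebra_simps)
  ultimately show ?thesis
    unfolding generator_def by (rule Lim_transform_eventually)
qed

lemma generator_dissipative:
  assumes "0 \<le> lam" and gen: "generator T f h"
  shows "lam * norm f \<le> norm (lam *\<^sub>R f - h)"
proof -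
  define q where "q t = (T t f - f) /\<^sub>R t - h" for t
  have q: "((\<lambda>t. norm (q t)) \<longlongrightarrow> 0) (at_right 0)"
    using gen unfolding generator_def q_def tendsto_norm_zero_iff by (simp add: Lim_null[symmetric])
  have bound: "lam * norm f \<le> norm (lam *\<^sub>R f - h) + norm (q t)" if "0 < t" for t
  proof -
    have "(1 + t * lam) *\<^sub>R f = T t f + t *\<^sub>R (lam *\<^sub>R f - h) - t *\<^sub>R q t"
      using that by (simp add: q_def algebra_simps)
    then have "(1 + t * lam) * norm f \<le> norm (T t f) + t * norm (lam *\<^sub>R f - h) + t * norm (q t)"
      using that assms(1) norm_triangle_ineq norm_triangle_ineq4
      by (smt (verit) norm_scaleR zero_le_mult_iff)
    then have "t * (lam * norm f) \<le> t * (norm (lam *\<^sub>R f - h) + norm (q t))"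
      using norm_semigroup_le[of t f] that by (simp add: algebra_simps)
    then show ?thesis
      using that by simp
  qed
  have ev: "\<forall>\<^sub>F t in at_right 0. lam * norm f \<le> norm (lam *\<^sub>R f - h) + norm (q t)"
    using eventually_at_right_less[of 0] by eventually_elim (rule bound)
  have lim: "((\<lambda>t. norm (lam *\<^sub>R f - h) + norm (q t)) \<longlongrightarrow> norm (lam *\<^sub>R f - h)) (at_right 0)"
    using tendsto_add[OF tendsto_const q] by simp
  show ?thesis
    using lim ev by (rule tendsto_lowerbound) simp
qed

lemma resolvent_eqI:
  assumes lam: "0 < lam" and gen: "generator T f h" and eq: "lam *\<^sub>R f - h = g"
  shows "resolvent T lam g = f"
  unfolding resolvent_def
proof (rule the_equality)
  show "\<exists>h. generator T f h \<and> lam *\<^sub>R f - h = g"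
    using gen eq by blast
next
  fix f'
  assume "\<exists>h'. generator T f' h' \<and> lam *\<^sub>R f' - h' = g"
  then obtain h' where gen': "generator T f' h'" and eq': "lam *\<^sub>R f' - h' = g"
    by blast
  have "generator T (f' - f) (h' - h)"
    using generator_scaleR_add[OF gen' gen, of 1 "-1"] by simp
  then have "lam * norm (f' - f) \<le> norm (lam *\<^sub>R (f' - f) - (h' - h))"
    using lam by (intro generator_dissipative) simp_all
  also have "lam *\<^sub>R (f' - f) - (h' - h) = 0"
    using eq eq' by (simp add: algebra_simps)
  finally show "f' = f"
    using lam by (simp add: mult_le_0_iff)
qed

lemma continuous_on_discounted_semigroup:
  "continuous_on {0..} (\<lambda>t. exp (- lam * t) *\<^sub>R T t g)"
  by (intro continuous_intros continuous_on_semigroup)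

lemma integrable_discounted_semigroup:
  "0 \<le> a \<Longrightarrow> (\<lambda>t. exp (- lam * t) *\<^sub>R T t g) integrable_on {a..b}"
  by (rule integrable_continuous_interval,
      rule continuous_on_subset[OF continuous_on_discounted_semigroup]) auto

lemma laplace_integral_diff:
  assumes "0 \<le> a" "a \<le> b"
  shows "laplace_integral T lam g b - laplace_integral T lam g a
    = integral {a..b} (\<lambda>t. exp (- lam * t) *\<^sub>R T t g)"
proof -
  have "integral {0..a} (\<lambda>t. exp (- lam * t) *\<^sub>R T t g)
      + integral {a..b} (\<lambda>t. exp (- lam * t) *\<^sub>R T t g)
      = integral {0..b} (\<lambda>t. exp (- lam * t) *\<^sub>R T t g)"
    by (rule Henstock_Kurzweil_Integration.integral_combine[OF assms integrable_discounted_semigroup]) simp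
  then show ?thesis
    unfolding laplace_integral_def by (simp add: algebra_simps)
qed

lemma norm_integral_discounted_semigroup_le:
  assumes "0 \<le> lam" "0 \<le> a" "a \<le> b"
  shows "norm (integral {a..b} (\<lambda>t. exp (- lam * t) *\<^sub>R T t g))
    \<le> exp (- lam * a) * norm g * (b - a)"
proof (rule integral_bound)
  show "continuous_on {a..b} (\<lambda>t. exp (- lam * t) *\<^sub>R T t g)"
    by (rule continuous_on_subset[OF continuous_on_discounted_semigroup]) (use assms in auto)
next
  fix t
  assume t: "t \<in> {a..b}"
  then have "exp (- lam * t) \<le> exp (- lam * a)"
    using assms by (simp add: mult_left_mono)
  then show "norm (exp (- lam * t) *\<^sub>R T t g) \<le> exp (- lam * a) * norm g"
    using t assms by (simp add: mult_mono norm_semigroup_le)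
qed (fact assms(3))

lemma convergent_laplace_integral:
  assumes "0 < lam"
  shows "convergent (\<lambda>n. laplace_integral T lam g (real n))"
proof -
  define J where "J k = laplace_integral T lam g (real (Suc k)) - laplace_integral T lam g (real k)" for k
  have "norm (J k) \<le> exp (- lam) ^ k * norm g" for k
    using norm_integral_discounted_semigroup_le[of lam "real k" "real (Suc k)" g] assms
    by (simp add: J_def laplace_integral_diff exp_minus_mult_real_nat)
  moreover have "summable (\<lambda>k. exp (- lam) ^ k * norm g)"
    using assms by (intro summable_mult2 summable_geometric) simp
  ultimately have "summable J"
    by (blast intro: summable_comparison_test')
  moreover have "(\<Sum>k<n. J k) = laplace_integral T lam g (real n)" for n
    using sum_lessThan_telescope[of "\<lambda>k. laplace_integral T lam g (real k)" n]
    by (simp add: J_def laplace_integral_def)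
  ultimately show ?thesis
    using summable_LIMSEQ[of J] by (auto intro: convergentI)
qed

lemma laplace_integral_shift_LIMSEQ:
  assumes "0 < lam" "0 \<le> s"
  shows "(\<lambda>n. laplace_integral T lam g (real n + s)) \<longlonglongrightarrow> laplace_transform T lam g"
proof -
  have lim: "(\<lambda>n. laplace_integral T lam g (real n)) \<longlonglongrightarrow> laplace_transform T lam g"
    unfolding laplace_transform_def
    using convergent_laplace_integral[OF assms(1)] by (simp add: convergent_LIMSEQ_iff)
  have "(\<lambda>n. laplace_integral T lam g (real n + s) - laplace_integral T lam g (real n)) \<longlonglongrightarrow> 0"
  proof (rule Lim_null_comparison)
    show "\<forall>\<^sub>F n in sequentially.
        norm (laplace_integral T lam g (real n + s) - laplace_integral T lam g (real n))
          \<le> exp (- lam) ^ n * norm g * s"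
      using norm_integral_discounted_semigroup_le[of lam "real n" "real n + s" g for n] assms
      by (simp add: laplace_integral_diff exp_minus_mult_real_nat)
    show "(\<lambda>n. exp (- lam) ^ n * norm g * s) \<longlonglongrightarrow> 0"
      using assms by (intro tendsto_mult_left_zero LIMSEQ_realpow_zero) simp_all
  qed
  from tendsto_add[OF this lim] show ?thesis
    by simp
qed

lemma semigroup_laplace_integral:
  assumes "0 \<le> s" "0 \<le> x"
  shows "T s (laplace_integral T lam g x)
    = exp (lam * s) *\<^sub>R (laplace_integral T lam g (x + s) - laplace_integral T lam g s)"
proof -
  let ?\<phi> = "\<lambda>t. exp (- lam * t) *\<^sub>R T t g"
  have "T s (laplace_integral T lam g x) = integral {0..x} (T s \<circ> ?\<phi>)"
    unfolding laplace_integral_def using assms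
    by (intro integral_linear[symmetric] integrable_discounted_semigroup bounded_linear_semigroup) simp_all
  also have "\<dots> = integral {0..x} (\<lambda>t. exp (lam * s) *\<^sub>R (?\<phi> \<circ> (+) s) t)"
  proof (rule integral_cong)
    fix t
    assume "t \<in> {0..x}"
    moreover have "exp (- lam * t) = exp (lam * s) * exp (- lam * (s + t))"
      by (simp add: exp_add[symmetric] algebra_simps)
    ultimately show "(T s \<circ> ?\<phi>) t = exp (lam * s) *\<^sub>R (?\<phi> \<circ> (+) s) t"
      using assms by (simp add: linear_scale linear_semigroup semigroup_add)
  qed
  also have "\<dots> = exp (lam * s) *\<^sub>R integral {0 + s..x + s} ?\<phi>"
    by (simp only: integral_cmul integral_shift_Icc_real)
  also have "\<dots> = exp (lam * s) *\<^sub>R (laplace_integral T lam g (x + s) - laplace_integral T lam g s)"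
    using assms by (simp add: laplace_integral_diff)
  finally show ?thesis .
qed

lemma semigroup_laplace_transform:
  assumes "0 < lam" "0 \<le> s"
  shows "T s (laplace_transform T lam g)
    = exp (lam * s) *\<^sub>R (laplace_transform T lam g - laplace_integral T lam g s)"
proof (rule LIMSEQ_unique)
  show "(\<lambda>n. T s (laplace_integral T lam g (real n))) \<longlonglongrightarrow> T s (laplace_transform T lam g)"
    using laplace_integral_shift_LIMSEQ[OF assms(1) order_refl, of g] assms
    by (intro bounded_linear.tendsto[OF bounded_linear_semigroup]) simp_all
  show "(\<lambda>n. T s (laplace_integral T lam g (real n)))
      \<longlonglongrightarrow> exp (lam * s) *\<^sub>R (laplace_transform T lam g - laplace_integral T lam g s)"
    unfolding semigroup_laplace_integral[OF assms(2) of_nat_0_le_iff]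
    by (intro tendsto_intros laplace_integral_shift_LIMSEQ assms)
qed

lemma laplace_integral_quotient_tendsto:
  "((\<lambda>s. laplace_integral T lam g s /\<^sub>R s) \<longlongrightarrow> g) (at_right 0)"
proof -
  have "((\<lambda>x. laplace_integral T lam g x) has_vector_derivative exp (- lam * 0) *\<^sub>R T 0 g)
      (at 0 within {0..1})"
    unfolding laplace_integral_def
    by (intro integral_has_vector_derivative continuous_on_subset[OF continuous_on_discounted_semigroup]) auto
  then have "((\<lambda>s. (1 / norm (s - 0)) *\<^sub>R (laplace_integral T lam g s
      - (laplace_integral T lam g 0 + (s - 0) *\<^sub>R g))) \<longlongrightarrow> 0) (at_right 0)"
    by (simp add: has_vector_derivative_def has_derivative_within at_within_Icc_at_right semigroup_0)
  moreover have "\<forall>\<^sub>F s in at_right 0. (1 / norm (s - 0)) *\<^sub>R (laplace_integral T lam g s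
      - (laplace_integral T lam g 0 + (s - 0) *\<^sub>R g)) = laplace_integral T lam g s /\<^sub>R s - g"
    using eventually_at_right_less[of 0]
    by eventually_elim (simp add: laplace_integral_def algebra_simps inverse_eq_divide)
  ultimately have "((\<lambda>s. laplace_integral T lam g s /\<^sub>R s - g) \<longlongrightarrow> 0) (at_right 0)"
    by (rule Lim_transform_eventually)
  then show ?thesis
    by (simp add: Lim_null[symmetric])
qed

lemma generator_laplace_transform:
  assumes "0 < lam"
  shows "generator T (laplace_transform T lam g) (lam *\<^sub>R laplace_transform T lam g - g)"
proof -
  let ?F = "laplace_transform T lam g" and ?I = "laplace_integral T lam g"
  have "((\<lambda>s. exp (lam * s)) has_field_derivative lam) (at 0 within {0<..})"
    by (auto intro!: derivative_eq_intros)
  then have "((\<lambda>s. (exp (lam * s) - 1) / s) \<longlongrightarrow> lam) (at_right 0)"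
    by (simp add: has_field_derivative_iff)
  moreover have "((\<lambda>s. exp (lam * s)) \<longlongrightarrow> 1) (at_right 0)"
    by (auto intro!: tendsto_eq_intros)
  ultimately have "((\<lambda>s. ((exp (lam * s) - 1) / s) *\<^sub>R ?F - exp (lam * s) *\<^sub>R (?I s /\<^sub>R s))
      \<longlongrightarrow> lam *\<^sub>R ?F - 1 *\<^sub>R g) (at_right 0)"
    by (intro tendsto_intros laplace_integral_quotient_tendsto)
  moreover have "\<forall>\<^sub>F s in at_right 0.
      ((exp (lam * s) - 1) / s) *\<^sub>R ?F - exp (lam * s) *\<^sub>R (?I s /\<^sub>R s) = (T s ?F - ?F) /\<^sub>R s"
    using eventually_at_right_less[of 0]
  proof eventually_elim
    case (elim s)
    then show ?case
      using assms by (simp add: semigroup_laplace_transform divide_inverse algebra_simps)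
  qed
  ultimately show ?thesis
    unfolding generator_def by (auto elim: Lim_transform_eventually)
qed

lemma laplace_transform_nonneg:
  assumes "0 < lam" and g: "nonneg_fun g"
  shows "nonneg_fun (laplace_transform T lam g)"
  unfolding nonneg_fun_def
proof
  fix x
  let ?ev = "\<lambda>f::'a \<Rightarrow>\<^sub>C real. apply_bcontfun f x"
  have "0 \<le> ?ev (laplace_integral T lam g (real n))" for n
  proof -
    have "0 \<le> integral {0..real n} (?ev \<circ> (\<lambda>t. exp (- lam * t) *\<^sub>R T t g))"
      using g nonneg_semigroup unfolding nonneg_fun_def
      by (intro integral_nonneg integrable_linear integrable_discounted_semigroup
          bounded_linear_apply_bcontfun) simp_all
    also have "\<dots> = ?ev (laplace_integral T lam g (real n))"
      unfolding laplace_integral_def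
      by (intro integral_linear integrable_discounted_semigroup bounded_linear_apply_bcontfun) simp
    finally show ?thesis .
  qed
  moreover have "(\<lambda>n. ?ev (laplace_integral T lam g (real n))) \<longlonglongrightarrow> ?ev (laplace_transform T lam g)"
    using laplace_integral_shift_LIMSEQ[OF assms(1) order_refl, of g]
    by (intro bounded_linear.tendsto[OF bounded_linear_apply_bcontfun]) simp
  ultimately show "0 \<le> ?ev (laplace_transform T lam g)"
    by (auto intro: LIMSEQ_le_const)
qed

lemma resolvent_eq_laplace_transform:
  "0 < lam \<Longrightarrow> resolvent T lam g = laplace_transform T lam g"
  by (rule resolvent_eqI[OF _ generator_laplace_transform]) simp_all

lemma generator_resolvent:
  "0 < lam \<Longrightarrow> generator T (resolvent T lam g) (lam *\<^sub>R resolvent T lam g - g)"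
  by (simp add: resolvent_eq_laplace_transform generator_laplace_transform)

lemma resolvent_nonneg: "0 < lam \<Longrightarrow> nonneg_fun g \<Longrightarrow> nonneg_fun (resolvent T lam g)"
  by (simp add: resolvent_eq_laplace_transform laplace_transform_nonneg)

lemma norm_resolvent_le:
  assumes "0 < lam"
  shows "lam * norm (resolvent T lam g) \<le> norm g"
  using generator_dissipative[OF _ generator_resolvent[OF assms], of lam] assms by simp

lemma resolvent_scaleR_add:
  assumes "0 < lam"
  shows "resolvent T lam (a *\<^sub>R g1 + b *\<^sub>R g2) = a *\<^sub>R resolvent T lam g1 + b *\<^sub>R resolvent T lam g2"
  by (rule resolvent_eqI[OF assms
        generator_scaleR_add[OF generator_resolvent[OF assms] generator_resolvent[OF assms]]])
    (simp add: algebra_simps)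

lemma resolvent_equation:
  assumes "0 < lam" "0 < mu"
  shows "resolvent T lam g - resolvent T mu g = (mu - lam) *\<^sub>R resolvent T lam (resolvent T mu g)"
proof -
  have "resolvent T mu g = resolvent T lam ((lam - mu) *\<^sub>R resolvent T mu g + 1 *\<^sub>R g)"
    by (rule resolvent_eqI[OF assms(1) generator_resolvent[OF assms(2)], symmetric])
      (simp add: algebra_simps)
  also have "\<dots> = (lam - mu) *\<^sub>R resolvent T lam (resolvent T mu g) + resolvent T lam g"
    unfolding resolvent_scaleR_add[OF assms(1)] by simp
  finally show ?thesis
    by (simp add: algebra_simps)
qed

lemma apply_resolvent_defect_bounds:
  assumes "0 < lam"
  shows "0 \<le> apply_bcontfun (resolvent_defect T lam) x \<and> apply_bcontfun (resolvent_defect T lam) x \<le> 1"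
proof -
  have "0 \<le> apply_bcontfun (resolvent T lam one_S) x"
    using resolvent_nonneg[OF assms, of one_S] by (simp add: nonneg_fun_def one_S_def)
  moreover have "lam * apply_bcontfun (resolvent T lam one_S) x \<le> 1"
  proof -
    have "lam * apply_bcontfun (resolvent T lam one_S) x \<le> lam * norm (resolvent T lam one_S)"
      using norm_bounded[of "resolvent T lam one_S" x] assms by (intro mult_left_mono) auto
    also have "\<dots> \<le> norm (one_S :: 'a \<Rightarrow>\<^sub>C real)"
      by (rule norm_resolvent_le[OF assms])
    also have "\<dots> \<le> 1"
      by (rule norm_bound) (simp add: one_S_def)
    finally show ?thesis .
  qed
  ultimately show ?thesis
    using assms by (simp add: resolvent_defect_def one_S_def)
qed

lemma resolvent_defect_nonneg: "0 < lam \<Longrightarrow> nonneg_fun (resolvent_defect T lam)"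
  using apply_resolvent_defect_bounds by (simp add: nonneg_fun_def)

lemma norm_resolvent_defect_le: "0 < lam \<Longrightarrow> norm (resolvent_defect T lam) \<le> 1"
  using apply_resolvent_defect_bounds by (intro norm_bound) auto

lemma resolvent_defect_equation:
  assumes "0 < lam" "0 < mu"
  shows "(lam - mu) *\<^sub>R resolvent T lam (resolvent_defect T mu)
    = resolvent_defect T mu - resolvent_defect T lam"
proof -
  let ?R = "resolvent T"
  have defect: "?R lam (resolvent_defect T mu) = ?R lam one_S - mu *\<^sub>R ?R lam (?R mu one_S)"
    using resolvent_scaleR_add[OF assms(1), of 1 one_S "- mu" "?R mu one_S"]
    by (simp add: resolvent_defect_def)
  have "(lam - mu) *\<^sub>R ?R lam (resolvent_defect T mu)
      = (lam - mu) *\<^sub>R ?R lam one_S - mu *\<^sub>R ((lam - mu) *\<^sub>R ?R lam (?R mu one_S))"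
    unfolding defect by (simp add: algebra_simps)
  also have "\<dots> = (lam - mu) *\<^sub>R ?R lam one_S - mu *\<^sub>R (?R mu one_S - ?R lam one_S)"
    using resolvent_equation[OF assms, of one_S] by (metis minus_diff_eq scaleR_minus_left)
  also have "\<dots> = resolvent_defect T mu - resolvent_defect T lam"
    by (simp add: resolvent_defect_def algebra_simps)
  finally show ?thesis .
qed

lemma resolvent_defect_antimono:
  assumes "0 < mu" "mu \<le> lam"
  shows "apply_bcontfun (resolvent_defect T lam) x \<le> apply_bcontfun (resolvent_defect T mu) x"
proof -
  have "0 \<le> (lam - mu) * apply_bcontfun (resolvent T lam (resolvent_defect T mu)) x"
    using resolvent_nonneg[OF _ resolvent_defect_nonneg[OF assms(1)], of lam] assms
    by (simp add: nonneg_fun_def)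
  also have "\<dots> = apply_bcontfun (resolvent_defect T mu) x - apply_bcontfun (resolvent_defect T lam) x"
    using arg_cong[OF resolvent_defect_equation, of lam mu "\<lambda>f. apply_bcontfun f x"] assms by simp
  finally show ?thesis
    by simp
qed

end

theorem theorem4:
  fixes T :: "real \<Rightarrow> ('a::metric_space \<Rightarrow>\<^sub>C real) \<Rightarrow> ('a \<Rightarrow>\<^sub>C real)"
  assumes "compact (UNIV :: 'a set)"
    and "feller_semigroup T"
    and "\<exists>lam>0. lam *\<^sub>R resolvent T lam one_S \<noteq> one_S"
  shows "\<exists>l. exit_law_LT (resolvent T) l"
proof -
  have "exit_law_LT (resolvent T) (resolvent_defect T)"
    unfolding exit_law_LT_def
  proof (intro conjI allI impI)
    fix a b :: real
    assume "0 < a"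
    then show "bounded (resolvent_defect T ` {a..b})"
      unfolding bounded_iff using norm_resolvent_defect_le[OF assms(2)] by (intro exI[of _ 1]) auto
  next
    show "\<exists>lam>0. resolvent_defect T lam \<noteq> 0"
      using assms(3) by (auto simp: resolvent_defect_def)
  next
    fix x
    show "\<exists>L. ((\<lambda>lam. apply_bcontfun (resolvent_defect T lam) x) \<longlongrightarrow> L) (at_right 0) \<and> L \<le> 1"
      using apply_resolvent_defect_bounds[OF assms(2)] resolvent_defect_antimono[OF assms(2)]
      by (intro antimono_bounded_tendsto_at_right) auto
  qed (simp_all add: resolvent_defect_nonneg[OF assms(2)] resolvent_defect_equation[OF assms(2)])
  then show ?thesis
    by blast
qed

end
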